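(* Let $X=(x_t,t\ge 0)$ and $Y=(y_t,t\ge0)$ be real-valued stochastic processes with continuous paths on a probability space $(\Omega,\mathcal F,\mathbb P)$. Assume $Y$ is strictly stationary and ergodic, and that $|x_t-y_t|\to 0$ almost surely as $t\to\infty$. Let $p\ge 1$ be an integer and $g\in\mathcal C^p(\mathbb R)$ with $k$-th derivative $g^{(k)}$, such that $\mathbb E|g^{(k)}(y_0)|<\infty$ for $k=0,1,\dots,p$, and $g^{(p)}$ is globally Lipschitz. Then $$\frac1T\int_0^T g(x_t)\,dt \longrightarrow \mathbb E\, g(y_0)\quad\text{almost surely as } T\to\infty.$$
   Context: "Strictly stationary and ergodic" is used in the sense that for every measurable $\varphi:\mathbb R\to\mathbb R$ with $\mathbb E|\varphi(y_0)|<\infty$ one has $\frac1T\int_0^T\varphi(y_t)\,dt\to\mathbb E\varphi(y_0)$ almost surely. *)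

theory Defs
  imports "HOL-Probability.Probability"
begin

definition time_avg :: "(real \<Rightarrow> real) \<Rightarrow> real \<Rightarrow> real" where
  "time_avg f T = (1 / T) * (LINT t:{0..T}|lborel. f t)"

definition strictly_stationary :: "'a measure \<Rightarrow> (real \<Rightarrow> 'a \<Rightarrow> real) \<Rightarrow> bool" where
  "strictly_stationary M y \<longleftrightarrow>
     (\<forall>n::nat. \<forall>ts::nat \<Rightarrow> real. \<forall>h::real.
        (\<forall>i<n. 0 \<le> ts i) \<longrightarrow> 0 \<le> h \<longrightarrow>
        distr M (PiM {..<n} (\<lambda>_. borel)) (\<lambda>\<omega>. \<lambda>i\<in>{..<n}. y (ts i + h) \<omega>)
        = distr M (PiM {..<n} (\<lambda>_. borel)) (\<lambda>\<omega>. \<lambda>i\<in>{..<n}. y (ts i) \<omega>))"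

definition ergodic_process :: "'a measure \<Rightarrow> (real \<Rightarrow> 'a \<Rightarrow> real) \<Rightarrow> bool" where
  "ergodic_process M y \<longleftrightarrow>
     (\<forall>\<phi> \<in> borel_measurable (borel :: real measure).
        integrable M (\<lambda>\<omega>. \<phi> (y 0 \<omega>)) \<longrightarrow>
        (AE \<omega> in M. ((\<lambda>T. time_avg (\<lambda>t. \<phi> (y t \<omega>)) T)
                       \<longlongrightarrow> (\<integral>\<omega>. \<phi> (y 0 \<omega>) \<partial>M)) at_top))"

definition Ck_real :: "nat \<Rightarrow> (real \<Rightarrow> real) \<Rightarrow> bool" where
  "Ck_real p g \<longleftrightarrow>
     (\<forall>k<p. \<forall>t. ((deriv ^^ k) g has_real_derivative (deriv ^^ Suc k) g t) (at t))
     \<and> continuous_on UNIV ((deriv ^^ p) g)"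

end

theory Submission
  imports Defs
begin

text \<open>
  Applying the mean value theorem at each order, starting from the Lipschitz derivative
  g^(p), gives the local bound |g a - g b| \<le> |a - b| C(b) for |a - b| \<le> 1, where
  C(b) = |g'(b)| + ... + |g^(p)(b)| + L is integrable along y_0. Once |x_t - y_t| < \<delta>,
  the integrand g(x_t) - g(y_t) is dominated by \<delta> C(y_t), so its time average is
  eventually at most \<delta> (|E C(y_0)| + 1) plus an initial contribution of order 1/T;
  ergodicity, applied to g and to C, does the rest.
\<close>

lemma lipschitz_derivative_increment_bound:
  fixes D :: "nat \<Rightarrow> real \<Rightarrow> real"
  assumes D: "\<And>k t. k < p \<Longrightarrow> (D k has_real_derivative D (Suc k) t) (at t)"
    and lip: "L-lipschitz_on UNIV (D p)"
    and "j \<le> p" and "\<bar>a - b\<bar> \<le> 1"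
  shows "\<bar>D j a - D j b\<bar> \<le> \<bar>a - b\<bar> * ((\<Sum>k\<in>{j<..p}. \<bar>D k b\<bar>) + L)"
  using assms(3,4)
proof (induction "p - j" arbitrary: j a)
  case 0
  then have "j = p" by simp
  have "dist (D p a) (D p b) \<le> L * dist a b" by (rule lipschitz_onD[OF lip]) auto
  then show ?case using \<open>j = p\<close> by (simp add: dist_real_def mult.commute)
next
  case (Suc n)
  then have "j < p" by simp
  let ?S = "(\<Sum>k\<in>{Suc j<..p}. \<bar>D k b\<bar>) + L"
  have "0 \<le> ?S" using lipschitz_on_nonneg[OF lip] by (simp add: sum_nonneg)
  have "norm (D j a - D j b) \<le> (\<bar>D (Suc j) b\<bar> + ?S) * norm (a - b)"
  proof (rule field_differentiable_bound[of "cball b 1"])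
    show "(D j has_real_derivative D (Suc j) w) (at w within cball b 1)" for w
      using D \<open>j < p\<close> by (blast intro: has_field_derivative_at_within)
    fix w assume "w \<in> cball b 1"
    then have "\<bar>w - b\<bar> \<le> 1" by (simp add: dist_real_def abs_minus_commute)
    then have "\<bar>D (Suc j) w - D (Suc j) b\<bar> \<le> \<bar>w - b\<bar> * ?S"
      using Suc.hyps(1)[of "Suc j" w] Suc.hyps(2) \<open>j < p\<close> by simp
    also have "\<dots> \<le> ?S"
      using \<open>\<bar>w - b\<bar> \<le> 1\<close> \<open>0 \<le> ?S\<close> by (simp add: mult_left_le_one_le)
    finally show "norm (D (Suc j) w) \<le> \<bar>D (Suc j) b\<bar> + ?S" by simp
  qed (use Suc.prems in \<open>auto simp: dist_real_def abs_minus_commute\<close>)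
  moreover have "{j<..p} = insert (Suc j) {Suc j<..p}" using \<open>j < p\<close> by auto
  ultimately show ?case by (simp add: add.assoc mult.commute)
qed

lemma Ck_real_continuous_deriv:
  assumes "Ck_real p g" and "k \<le> p"
  shows "continuous_on UNIV ((deriv ^^ k) g)"
proof (cases "k = p")
  case False
  then have "k < p" using \<open>k \<le> p\<close> by simp
  then show ?thesis using assms(1) unfolding Ck_real_def
    by (intro continuous_at_imp_continuous_on) (blast intro: DERIV_isCont)
qed (use assms in \<open>simp add: Ck_real_def\<close>)

lemma Ck_real_increment_bound:
  assumes "Ck_real p g" and "L-lipschitz_on UNIV ((deriv ^^ p) g)" and "\<bar>a - b\<bar> \<le> 1"
  shows "\<bar>g a - g b\<bar> \<le> \<bar>a - b\<bar> * ((\<Sum>k\<in>{0<..p}. \<bar>(deriv ^^ k) g b\<bar>) + L)"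
  using lipschitz_derivative_increment_bound[of p "\<lambda>k. (deriv ^^ k) g" L 0 a b] assms
  by (simp add: Ck_real_def)

lemma time_avg_eq_integral:
  assumes "continuous_on {0..T} f"
  shows "time_avg f T = integral {0..T} f / T"
  using set_borel_integral_eq_integral(2)[OF borel_integrable_atLeastAtMost'[OF assms]]
  by (simp add: time_avg_def)

lemma time_avg_diff:
  assumes "continuous_on {0..T} f" and "continuous_on {0..T} g"
  shows "time_avg (\<lambda>t. f t - g t) T = time_avg f T - time_avg g T"
  using assms
  by (simp add: time_avg_eq_integral continuous_on_diff integrable_continuous_interval
      integral_diff diff_divide_distrib)

lemma integral_abs_le_initial_plus_dominated:
  fixes f c :: "real \<Rightarrow> real"
  assumes "continuous_on {0..T} f" and "continuous_on {0..T} c"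
    and "0 \<le> T\<^sub>0" and "T\<^sub>0 \<le> T" and "0 \<le> \<delta>"
    and c_nonneg: "\<And>t. t \<in> {0..T} \<Longrightarrow> 0 \<le> c t"
    and dom: "\<And>t. t \<in> {T\<^sub>0..T} \<Longrightarrow> \<bar>f t\<bar> \<le> \<delta> * c t"
  shows "\<bar>integral {0..T} f\<bar> \<le> \<bar>integral {0..T\<^sub>0} f\<bar> + \<delta> * integral {0..T} c"
proof -
  have int_f: "f integrable_on {0..T}" and int_c: "c integrable_on {0..T}"
    using assms(1,2) by (simp_all add: integrable_continuous_interval)
  have int_f': "f integrable_on {T\<^sub>0..T}" and int_c': "c integrable_on {T\<^sub>0..T}"
    using int_f int_c \<open>0 \<le> T\<^sub>0\<close> by (auto intro: integrable_subinterval_real)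
  have split_f: "integral {0..T} f = integral {0..T\<^sub>0} f + integral {T\<^sub>0..T} f"
    using Henstock_Kurzweil_Integration.integral_combine[OF assms(3,4) int_f] by simp
  have split_c: "integral {0..T} c = integral {0..T\<^sub>0} c + integral {T\<^sub>0..T} c"
    using Henstock_Kurzweil_Integration.integral_combine[OF assms(3,4) int_c] by simp
  have "\<bar>integral {T\<^sub>0..T} f\<bar> \<le> integral {T\<^sub>0..T} (\<lambda>t. \<delta> * c t)"
    using integral_norm_bound_integral[OF int_f' integrable_cmul[OF int_c', of \<delta>]] dom by simp
  also have "\<dots> = \<delta> * integral {T\<^sub>0..T} c" by simp
  also have "\<dots> \<le> \<delta> * integral {0..T} c"
  proof -
    have "0 \<le> integral {0..T\<^sub>0} c"
      using assms(4) c_nonneg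
      by (intro integral_nonneg integrable_subinterval_real[OF int_c]) auto
    then show ?thesis using split_c \<open>0 \<le> \<delta>\<close> by (intro mult_left_mono) auto
  qed
  finally show ?thesis using split_f by linarith
qed

lemma time_avg_tendsto_zero_if_dominated:
  fixes f c :: "real \<Rightarrow> real"
  assumes cont_f: "continuous_on {0..} f" and cont_c: "continuous_on {0..} c"
    and c_nonneg: "\<And>t. 0 \<le> t \<Longrightarrow> 0 \<le> c t"
    and avg_c: "((\<lambda>T. time_avg c T) \<longlongrightarrow> m) at_top"
    and dom: "\<And>\<delta>. 0 < \<delta> \<Longrightarrow> eventually (\<lambda>t. \<bar>f t\<bar> \<le> \<delta> * c t) at_top"
  shows "((\<lambda>T. time_avg f T) \<longlongrightarrow> 0) at_top"
  unfolding tendsto_iff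
proof (intro allI impI)
  fix \<epsilon> :: real assume "0 < \<epsilon>"
  define \<delta> where "\<delta> = \<epsilon> / (2 * (\<bar>m\<bar> + 1))"
  have "0 < \<delta>" and \<delta>_m: "\<delta> * (\<bar>m\<bar> + 1) = \<epsilon> / 2"
    using \<open>0 < \<epsilon>\<close> by (simp_all add: \<delta>_def field_simps add_pos_nonneg)
  obtain N where N: "\<And>t. t \<ge> N \<Longrightarrow> \<bar>f t\<bar> \<le> \<delta> * c t"
    using dom[OF \<open>0 < \<delta>\<close>] unfolding eventually_at_top_linorder by blast
  define T\<^sub>0 where "T\<^sub>0 = max N 0"
  define A where "A = \<bar>integral {0..T\<^sub>0} f\<bar>"
  have "eventually (\<lambda>T. time_avg c T < \<bar>m\<bar> + 1) at_top"
    using order_tendstoD(2)[OF avg_c] by simp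
  moreover have "eventually (\<lambda>T. max T\<^sub>0 (2 * A / \<epsilon>) < T) at_top"
    by (rule eventually_gt_at_top)
  ultimately show "eventually (\<lambda>T. dist (time_avg f T) 0 < \<epsilon>) at_top"
  proof eventually_elim
    case (elim T)
    then have "0 < T" "T\<^sub>0 \<le> T" "A / T < \<epsilon> / 2"
      using \<open>0 < \<epsilon>\<close> by (auto simp: T\<^sub>0_def field_simps)
    have cont_f_T: "continuous_on {0..T} f" and cont_c_T: "continuous_on {0..T} c"
      using cont_f cont_c by (auto elim: continuous_on_subset)
    have "\<bar>integral {0..T} f\<bar> \<le> A + \<delta> * integral {0..T} c"
      unfolding A_def
      by (rule integral_abs_le_initial_plus_dominated[OF cont_f_T cont_c_T])
        (use \<open>T\<^sub>0 \<le> T\<close> \<open>0 < \<delta>\<close> c_nonneg N in \<open>auto simp: T\<^sub>0_def\<close>)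
    then have "\<bar>integral {0..T} f\<bar> / T \<le> (A + \<delta> * integral {0..T} c) / T"
      using \<open>0 < T\<close> by (simp add: divide_right_mono)
    then have "\<bar>time_avg f T\<bar> \<le> A / T + \<delta> * time_avg c T"
      using \<open>0 < T\<close> cont_f_T cont_c_T by (simp add: time_avg_eq_integral add_divide_distrib)
    also have "\<dots> < \<epsilon> / 2 + \<delta> * (\<bar>m\<bar> + 1)"
      using \<open>A / T < \<epsilon> / 2\<close> elim \<open>0 < \<delta>\<close> by (intro add_strict_mono mult_strict_left_mono)
    finally show ?case using \<delta>_m by (simp add: dist_real_def)
  qed
qed

lemma time_avg_tendsto_if_asymptotic:
  fixes x y G C :: "real \<Rightarrow> real"
  assumes cont_x: "continuous_on {0..} x" and cont_y: "continuous_on {0..} y"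
    and cont_G: "continuous_on UNIV G" and cont_C: "continuous_on UNIV C"
    and C_nonneg: "\<And>z. 0 \<le> C z"
    and G_increment: "\<And>a b. \<bar>a - b\<bar> \<le> 1 \<Longrightarrow> \<bar>G a - G b\<bar> \<le> \<bar>a - b\<bar> * C b"
    and asymptotic: "((\<lambda>t. \<bar>x t - y t\<bar>) \<longlongrightarrow> 0) at_top"
    and avg_G: "((\<lambda>T. time_avg (\<lambda>t. G (y t)) T) \<longlongrightarrow> l) at_top"
    and avg_C: "((\<lambda>T. time_avg (\<lambda>t. C (y t)) T) \<longlongrightarrow> m) at_top"
  shows "((\<lambda>T. time_avg (\<lambda>t. G (x t)) T) \<longlongrightarrow> l) at_top"
proof -
  have cont_Gx: "continuous_on {0..} (\<lambda>t. G (x t))"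
    and cont_Gy: "continuous_on {0..} (\<lambda>t. G (y t))"
    and cont_Cy: "continuous_on {0..} (\<lambda>t. C (y t))"
    using cont_x cont_y
    by (auto intro: continuous_on_compose2[OF cont_G] continuous_on_compose2[OF cont_C])
  have "eventually (\<lambda>t. \<bar>G (x t) - G (y t)\<bar> \<le> \<delta> * C (y t)) at_top" if "0 < \<delta>" for \<delta>
  proof -
    have "eventually (\<lambda>t. \<bar>x t - y t\<bar> < min \<delta> 1) at_top"
      using order_tendstoD(2)[OF asymptotic, of "min \<delta> 1"] \<open>0 < \<delta>\<close> by simp
    then show ?thesis
    proof eventually_elim
      case (elim t)
      then have "\<bar>G (x t) - G (y t)\<bar> \<le> \<bar>x t - y t\<bar> * C (y t)" by (intro G_increment) simp
      also have "\<dots> \<le> \<delta> * C (y t)" using elim C_nonneg by (intro mult_right_mono) auto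
      finally show ?case .
    qed
  qed
  then have "((\<lambda>T. time_avg (\<lambda>t. G (x t) - G (y t)) T) \<longlongrightarrow> 0) at_top"
    using cont_Gx cont_Gy cont_Cy C_nonneg avg_C
    by (intro time_avg_tendsto_zero_if_dominated) (auto intro: continuous_on_diff)
  from tendsto_add[OF this avg_G] show ?thesis
    using cont_Gx cont_Gy by (simp add: time_avg_diff continuous_on_subset)
qed

theorem theorem3p2:
  fixes M :: "'a measure" and x y :: "real \<Rightarrow> 'a \<Rightarrow> real"
    and g :: "real \<Rightarrow> real" and p :: nat
  assumes "prob_space M"
    and "\<And>t. x t \<in> borel_measurable M"
    and "\<And>t. y t \<in> borel_measurable M"
    and "\<And>\<omega>. \<omega> \<in> space M \<Longrightarrow> continuous_on {0..} (\<lambda>t. x t \<omega>)"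
    and "\<And>\<omega>. \<omega> \<in> space M \<Longrightarrow> continuous_on {0..} (\<lambda>t. y t \<omega>)"
    and "strictly_stationary M y"
    and "ergodic_process M y"
    and "AE \<omega> in M. ((\<lambda>t. \<bar>x t \<omega> - y t \<omega>\<bar>) \<longlongrightarrow> 0) at_top"
    and "p \<ge> 1"
    and "Ck_real p g"
    and "\<And>k. k \<le> p \<Longrightarrow> integrable M (\<lambda>\<omega>. (deriv ^^ k) g (y 0 \<omega>))"
    and "\<exists>L. L-lipschitz_on UNIV ((deriv ^^ p) g)"
  shows "AE \<omega> in M. ((\<lambda>T. time_avg (\<lambda>t. g (x t \<omega>)) T)
                       \<longlongrightarrow> (\<integral>\<omega>. g (y 0 \<omega>) \<partial>M)) at_top"
proof -
  interpret prob_space M by (rule assms(1))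
  obtain L where lip: "L-lipschitz_on UNIV ((deriv ^^ p) g)" using assms(12) by blast
  define C where "C z = (\<Sum>k\<in>{0<..p}. \<bar>(deriv ^^ k) g z\<bar>) + L" for z
  have C_nonneg: "0 \<le> C z" for z
    using lipschitz_on_nonneg[OF lip] by (simp add: C_def sum_nonneg)
  have cont_deriv: "continuous_on UNIV ((deriv ^^ k) g)" if "k \<le> p" for k
    using Ck_real_continuous_deriv[OF assms(10) that] .
  have cont_g: "continuous_on UNIV g" using cont_deriv[of 0] by simp
  have cont_C: "continuous_on UNIV C" unfolding C_def by (intro continuous_intros cont_deriv) auto
  have "integrable M (\<lambda>\<omega>. C (y 0 \<omega>))"
    unfolding C_def using assms(11)
    by (intro Bochner_Integration.integrable_add Bochner_Integration.integrable_sum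
        integrable_abs integrable_const) auto
  then have avg_C: "AE \<omega> in M. ((\<lambda>T. time_avg (\<lambda>t. C (y t \<omega>)) T)
                                 \<longlongrightarrow> (\<integral>\<omega>. C (y 0 \<omega>) \<partial>M)) at_top"
    using assms(7) borel_measurable_continuous_onI[OF cont_C] unfolding ergodic_process_def by blast
  have avg_g: "AE \<omega> in M. ((\<lambda>T. time_avg (\<lambda>t. g (y t \<omega>)) T)
                                 \<longlongrightarrow> (\<integral>\<omega>. g (y 0 \<omega>) \<partial>M)) at_top"
    using assms(7,11) borel_measurable_continuous_onI[OF cont_g]
    unfolding ergodic_process_def by fastforce
  have g_increment: "\<bar>g a - g b\<bar> \<le> \<bar>a - b\<bar> * C b" if "\<bar>a - b\<bar> \<le> 1" for a b
    using Ck_real_increment_bound[OF assms(10) lip that] by (simp add: C_def)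
  from assms(8) avg_C avg_g AE_space show ?thesis
  proof eventually_elim
    case (elim \<omega>)
    then show ?case
      by (intro time_avg_tendsto_if_asymptotic[OF assms(4,5) cont_g cont_C C_nonneg g_increment])
  qed
qed

end
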